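(* Let $\mathbf{I}$ be countable and $\delta>0$. Consider the multivariate age dependent Hawkes process with hard refractory period, i.e. the time homogeneous counting process with generic intensities $$\phi^i(x)=\psi^i\Big(\sum_{j\in\mathbf{I}}\int_{-\infty}^0h^i_j(-s)\,dx^j_s\Big)\mathbf{1}_{a^i(x)>\delta},$$ where $a^i(x)=-\sup\{t^i_k\in x: t^i_k<0\}$ (and $a^i(x)=+\infty$ if $x$ has no point of index $i$). Assume that each $h^i_j$ is non-negative, non-increasing and in $L^1$, and that for every $i$, $\sum_{j\in\mathbf{I}}\|h^i_j\|_1<\infty$ and $\sum_{j\in\mathbf{I}}h^i_j(0)<\infty$. For each $i$ let $(\omega^i_k)_{k\ge1}$ be subsets of $\mathbf{I}$ with $\omega^i_1=\{i\}$, $\omega^i_k\subset\omega^i_{k+1}$, $\bigcup_k\omega^i_k=\mathbf{I}$, let $v^i_k=\omega^i_k\times[-k\delta,0)$ and $\mathbf{V}^i=\mathbf{V}^i_{nested}=\{v^i_k:k\ge1\}$, and let $\mathcal{Y}=\mathcal{X}^{>\delta}=\{x\in\mathcal{X}:t^i_{n+1}-t^i_n>\delta\ \forall i,n\}$. 1. If each $\psi^i$ is increasing, non-negative and continuous, then with $\Delta^i_1(x)=\Delta^i_{v^i_1}(x)=\psi^i(0)\mathbf{1}_{a^i(x)>\delta}$ and, for $k\ge2$, $$\Delta^i_k(x)=\Delta^i_{v^i_k}(x)=\Big[\psi^i\Big(\sum_{j\in\omega^i_k}\int_{-k\delta}^0h^i_j(-s)dx^j_s\Big)-\psi^i\Big(\sum_{j\in\omega^i_{k-1}}\int_{-(k-1)\delta}^0h^i_j(-s)dx^j_s\Big)\Big]\mathbf{1}_{a^i(x)>\delta},$$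 the functions $\Delta^i_k$ are non-negative, cylindrical on $v^i_k$, and $\phi^i(x)=\sum_{k\ge1}\Delta^i_k(x)$ for $x\in\mathcal{X}^{>\delta}$; consequently, for any probabilities $\lambda^i$ on $\mathbf{V}^i$ with $\lambda^i(v)=0$ only if $\sup_{x\in\mathcal{X}^{>\delta}}\Delta^i_v(x)=0$, the process admits a Kalikow decomposition w.r.t. $(\mathbf{V}^i)$ and $\mathcal{X}^{>\delta}$ with weights $\lambda^i$ and $\phi^i_v=\Delta^i_v/\lambda^i(v)$ (convention $0/0=0$). 2. If in addition each $\psi^i$ is $L$-Lipschitz, then for any constants $\Gamma^i_1\ge\bar\Gamma^i_1:=\psi^i(0)$ and, for $k\ge2$, $$\Gamma^i_k\ge\bar\Gamma^i_k:=L\Big[\sum_{j\in\omega^i_k\setminus\omega^i_{k-1}}\big(h^i_j(0)+\delta^{-1}\|h^i_j\|_1\big)+\sum_{j\in\omega^i_{k-1}}h^i_j((k-1)\delta)\Big]$$ with $\Gamma^i:=\sum_{k\ge1}\Gamma^i_k<\infty$, one has $\sup_{x\in\mathcal{X}^{>\delta}}\Delta^i_k(x)\le\Gamma^i_k$; hence (when $\Gamma^i\neq0$) choosing $\lambda^i(v^i_k)=\Gamma^i_k/\Gamma^i$ and $\phi^i_{v^i_k}=\frac{\Gamma^i}{\Gamma^i_k}\Delta^i_k$ gives a Kalikow decomposition w.r.t. $(\mathbf{V}^i)$ and $\mathcal{X}^{>\delta}$ in which all $\phi^i_v$ and $\phi^i$ are bounded by $\Gamma^i$ on $\mathcal{X}^{>\delta}$.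 Moreover $\sum_{k\ge1}\bar\Gamma^i_k\le\psi^i(0)+2L\big[\sum_{j\in\mathbf{I}}h^i_j(0)+\delta^{-1}\sum_{j\in\mathbf{I}}\|h^i_j\|_1\big]$, so $\Gamma^i_k=\bar\Gamma^i_k$ is a valid choice.
   Context: $\mathcal{X}$ is the set of configurations $x=(\{t^i_n\}_n)_{i\in\mathbf{I}}$ of locally finite point sets in $(-\infty,0)$ (points indexed increasingly in $n$), $dx^j_s=\sum_n\delta_{t^j_n}(ds)$, and $\int_a^b$ means integration over $[a,b)$. A neighborhood is a Borel subset $v\subset\mathbf{I}\times(-\infty,0)$; $f$ is cylindrical on $v$ if $f(x)=f(y)$ whenever $x,y$ have the same points in $v$. A time homogeneous counting process with generic intensity $\phi^i:\mathcal{X}\to\mathbb{R}_+$ has stochastic intensity at time $t$ equal to $\phi^i$ of the past configuration before $t$ shifted so that $t$ becomes $0$. Kalikow decomposition w.r.t. $(\mathbf{V}^i)$ and $\mathcal{Y}$: for each $i$ a probability $\lambda^i$ on $\mathbf{V}^i$ and functions $\phi^i_v\ge0$ cylindrical on $v$ with $\phi^i(x)=\sum_{v\in\mathbf{V}^i}\lambda^i(v)\phi^i_v(x)$ for all $x\in\mathcal{X}\cap\mathcal{Y}$. *)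

theory Defs
  imports "HOL-Analysis.Analysis" "HOL-Library.Countable_Set"
begin

text \<open>A configuration assigns to each index i the set of points of type i
(all in (-infty,0)). Locally finite: finitely many points in each bounded [a,0).\<close>

type_synonym 'i conf = "'i \<Rightarrow> real set"

definition confs :: "'i conf set" where
  "confs = {x. \<forall>i. x i \<subseteq> {..<0} \<and> (\<forall>a. finite (x i \<inter> {a..<0}))}"

definition pts :: "'i conf \<Rightarrow> ('i \<times> real) set" where
  "pts x = {(j, t). t \<in> x j}"

definition cylindrical :: "('i \<times> real) set \<Rightarrow> ('i conf \<Rightarrow> real) \<Rightarrow> bool" where
  "cylindrical v f \<longleftrightarrow>
     (\<forall>x\<in>confs. \<forall>y\<in>confs. pts x \<inter> v = pts y \<inter> v \<longrightarrow> f x = f y)"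

definition confs_sep :: "real \<Rightarrow> 'i conf set" where
  "confs_sep \<delta> = {x \<in> confs. \<forall>i. \<forall>s\<in>x i. \<forall>t\<in>x i. s < t \<longrightarrow> t - s > \<delta>}"

definition age :: "'i conf \<Rightarrow> 'i \<Rightarrow> ereal" where
  "age x i = (if x i = {} then \<infinity> else ereal (- Sup (x i)))"

definition refr :: "real \<Rightarrow> 'i conf \<Rightarrow> 'i \<Rightarrow> real" where
  "refr \<delta> x i = (if age x i > ereal \<delta> then 1 else 0)"

text \<open>Integral over [a,0) of g(-s) dx^j_s (sum over the points of x j in [a,0)).\<close>
definition cint :: "(real \<Rightarrow> real) \<Rightarrow> real set \<Rightarrow> real \<Rightarrow> real" where
  "cint g xj a = (\<Sum>\<^sub>\<infinity>t\<in>xj \<inter> {a..<0}. g (- t))"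

definition cint_all :: "(real \<Rightarrow> real) \<Rightarrow> real set \<Rightarrow> real" where
  "cint_all g xj = (\<Sum>\<^sub>\<infinity>t\<in>xj \<inter> {..<0}. g (- t))"

definition hawkes_phi ::
  "('i \<Rightarrow> real \<Rightarrow> real) \<Rightarrow> ('i \<Rightarrow> 'i \<Rightarrow> real \<Rightarrow> real) \<Rightarrow> real \<Rightarrow> 'i \<Rightarrow> 'i conf \<Rightarrow> real" where
  "hawkes_phi \<psi> h \<delta> i x = \<psi> i (\<Sum>\<^sub>\<infinity>j. cint_all (h i j) (x j)) * refr \<delta> x i"

definition nbh :: "('i \<Rightarrow> nat \<Rightarrow> 'i set) \<Rightarrow> real \<Rightarrow> 'i \<Rightarrow> nat \<Rightarrow> ('i \<times> real) set" where
  "nbh \<omega> \<delta> i k = \<omega> i k \<times> {- (real k * \<delta>)..<0}"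

definition Vnest :: "('i \<Rightarrow> nat \<Rightarrow> 'i set) \<Rightarrow> real \<Rightarrow> 'i \<Rightarrow> ('i \<times> real) set set" where
  "Vnest \<omega> \<delta> i = nbh \<omega> \<delta> i ` {1..}"

definition nbh_idx :: "('i \<Rightarrow> nat \<Rightarrow> 'i set) \<Rightarrow> real \<Rightarrow> 'i \<Rightarrow> ('i \<times> real) set \<Rightarrow> nat" where
  "nbh_idx \<omega> \<delta> i v = (THE k. k \<ge> 1 \<and> v = nbh \<omega> \<delta> i k)"

definition Ssum :: "('i \<Rightarrow> 'i \<Rightarrow> real \<Rightarrow> real) \<Rightarrow> ('i \<Rightarrow> nat \<Rightarrow> 'i set) \<Rightarrow> real \<Rightarrow> 'i \<Rightarrow> nat \<Rightarrow> 'i conf \<Rightarrow> real" where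
  "Ssum h \<omega> \<delta> i k x = (\<Sum>\<^sub>\<infinity>j\<in>\<omega> i k. cint (h i j) (x j) (- (real k * \<delta>)))"

definition Delta ::
  "('i \<Rightarrow> real \<Rightarrow> real) \<Rightarrow> ('i \<Rightarrow> 'i \<Rightarrow> real \<Rightarrow> real) \<Rightarrow> ('i \<Rightarrow> nat \<Rightarrow> 'i set) \<Rightarrow> real
     \<Rightarrow> 'i \<Rightarrow> nat \<Rightarrow> 'i conf \<Rightarrow> real" where
  "Delta \<psi> h \<omega> \<delta> i k x =
     (if k = 1 then \<psi> i 0 * refr \<delta> x i
      else (\<psi> i (Ssum h \<omega> \<delta> i k x) - \<psi> i (Ssum h \<omega> \<delta> i (k - 1) x)) * refr \<delta> x i)"

definition Delta_v ::
  "('i \<Rightarrow> real \<Rightarrow> real) \<Rightarrow> ('i \<Rightarrow> 'i \<Rightarrow> real \<Rightarrow> real) \<Rightarrow> ('i \<Rightarrow> nat \<Rightarrow> 'i set) \<Rightarrow> real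
     \<Rightarrow> 'i \<Rightarrow> ('i \<times> real) set \<Rightarrow> 'i conf \<Rightarrow> real" where
  "Delta_v \<psi> h \<omega> \<delta> i v x = Delta \<psi> h \<omega> \<delta> i (nbh_idx \<omega> \<delta> i v) x"

definition L1norm :: "(real \<Rightarrow> real) \<Rightarrow> real" where
  "L1norm g = (LINT t:{0..}|lborel. \<bar>g t\<bar>)"

definition kalikow_at ::
  "('i \<Rightarrow> ('i \<times> real) set set) \<Rightarrow> 'i conf set \<Rightarrow> ('i \<Rightarrow> 'i conf \<Rightarrow> real)
     \<Rightarrow> ('i \<Rightarrow> ('i \<times> real) set \<Rightarrow> real) \<Rightarrow> ('i \<Rightarrow> ('i \<times> real) set \<Rightarrow> 'i conf \<Rightarrow> real) \<Rightarrow> 'i \<Rightarrow> bool" where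
  "kalikow_at V Y phi lam phiv i \<longleftrightarrow>
     (\<forall>v\<in>V i. 0 \<le> lam i v) \<and> (lam i has_sum 1) (V i) \<and>
     (\<forall>v\<in>V i. (\<forall>x\<in>confs \<inter> Y. 0 \<le> phiv i v x) \<and> cylindrical v (phiv i v)) \<and>
     (\<forall>x\<in>confs \<inter> Y. ((\<lambda>v. lam i v * phiv i v x) has_sum phi i x) (V i))"

definition kalikow where
  "kalikow V Y phi lam phiv \<longleftrightarrow> (\<forall>i. kalikow_at V Y phi lam phiv i)"

definition Gbar ::
  "('i \<Rightarrow> real \<Rightarrow> real) \<Rightarrow> ('i \<Rightarrow> 'i \<Rightarrow> real \<Rightarrow> real) \<Rightarrow> ('i \<Rightarrow> nat \<Rightarrow> 'i set) \<Rightarrow> real \<Rightarrow> real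
     \<Rightarrow> 'i \<Rightarrow> nat \<Rightarrow> real" where
  "Gbar \<psi> h \<omega> \<delta> L i k =
     (if k = 1 then \<psi> i 0
      else L * ((\<Sum>\<^sub>\<infinity>j\<in>\<omega> i k - \<omega> i (k - 1). h i j 0 + L1norm (h i j) / \<delta>)
              + (\<Sum>\<^sub>\<infinity>j\<in>\<omega> i (k - 1). h i j (real (k - 1) * \<delta>))))"

end

theory Submission
  imports Defs
begin

text \<open>A configuration in X^{>\<delta>} has at most one point of each type in any window of length \<delta>,
  and a non-increasing kernel h dominates h(s) on the window of length \<delta> before s. Hence the
  points of one type contribute at most h(0) + \<parallel>h\<parallel>_1/\<delta>, which makes all interaction
  sums finite and summable in j. The truncated sums S_k increase with k, so \<Delta>_k \<ge> 0 for
  increasing \<psi>; the \<Delta>_k telescope to \<psi>(S_k) 1_{a > \<delta>}, and S_k tends to the full interaction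
  because the neighbourhoods v_k exhaust I \<times> (-\<infinity>, 0), so continuity of \<psi> gives \<Sigma>_k \<Delta>_k = \<phi>.
  Going from S_{k-1} to S_k adds the new types, each bounded as above, and for the old types only
  the window [-k\<delta>, -(k-1)\<delta>), which holds at most one point; for L-Lipschitz \<psi> this gives
  \<Delta>_k \<le> \<Gamma>bar_k. Summing over k compares h at the grid points (k-1)\<delta> with its integral once more.
  The Kalikow decompositions are then obtained by dividing \<Delta>_v by the weights.\<close>

definition separated :: "real \<Rightarrow> real set \<Rightarrow> bool" where
  "separated d S \<longleftrightarrow> (\<forall>s\<in>S. \<forall>t\<in>S. s < t \<longrightarrow> d \<le> t - s)"

lemma separated_subset: "separated d S \<Longrightarrow> T \<subseteq> S \<Longrightarrow> separated d T"
  by (auto simp: separated_def)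

lemma separated_uminus: "separated d S \<Longrightarrow> separated d (uminus ` S)"
  by (auto simp: separated_def)

lemma separated_window_subsingleton:
  assumes "separated d S" "s \<in> S \<inter> {a..<a + d}" "t \<in> S \<inter> {a..<a + d}"
  shows "s = t"
  using assms by (cases s t rule: linorder_cases) (force simp: separated_def)+

lemma sum_separated_window_le:
  assumes sep: "separated d S"
    and bound: "\<And>t. t \<in> S \<inter> {a..<a + d} \<Longrightarrow> f t \<le> c" and "0 \<le> c"
  shows "sum f (S \<inter> {a..<a + d}) \<le> c"
proof (cases "S \<inter> {a..<a + d} = {}")
  case False
  then obtain u where u: "u \<in> S \<inter> {a..<a + d}" by blast
  then have "S \<inter> {a..<a + d} = {u}"
    using separated_window_subsingleton[OF sep] by blast
  then show ?thesis using bound u by simp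
qed (simp add: \<open>0 \<le> c\<close>)

lemma eventually_finite_subset_incseq:
  fixes B :: "nat \<Rightarrow> 'a set"
  assumes "finite G" "G \<subseteq> (\<Union>n. B n)" "incseq B"
  shows "\<forall>\<^sub>F n in sequentially. G \<subseteq> B n"
proof -
  have "\<forall>\<^sub>F n in sequentially. a \<in> B n" if a: "a \<in> G" for a
  proof -
    obtain m where "a \<in> B m" using a assms(2) by blast
    then show ?thesis
      using \<open>incseq B\<close> by (auto simp: eventually_sequentially dest: monoD)
  qed
  then show ?thesis
    unfolding subset_eq by (intro eventually_ball_finite[OF \<open>finite G\<close>]) blast
qed

lemma infsum_incseq_Union_LIMSEQ:
  fixes f :: "'a \<Rightarrow> real"
  assumes sm: "f summable_on A" and nonneg: "\<And>a. a \<in> A \<Longrightarrow> 0 \<le> f a"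
    and "incseq B" and Union: "(\<Union>n. B n) = A"
  shows "(\<lambda>n. infsum f (B n)) \<longlonglongrightarrow> infsum f A"
proof -
  have sub: "B n \<subseteq> A" for n using Union by blast
  have smB: "f summable_on B n" for n using summable_on_subset_banach[OF sm sub] .
  have nonneg_B: "0 \<le> f a" if "a \<in> B n" for a n using that sub nonneg by blast
  have le: "infsum f (B n) \<le> infsum f A" for n
    using smB sm sub nonneg by (intro infsum_mono2) auto
  show ?thesis
  proof (rule order_tendstoI)
    fix y assume "infsum f A < y"
    then show "\<forall>\<^sub>F n in sequentially. infsum f (B n) < y"
      using le by (auto intro: always_eventually le_less_trans)
  next
    fix y assume y: "y < infsum f A"
    obtain G where G: "finite G" "G \<subseteq> A" "dist (sum f G) (infsum f A) \<le> (infsum f A - y) / 2"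
      using infsum_finite_approximation[OF sm, of "(infsum f A - y) / 2"] y by auto
    have "\<forall>\<^sub>F n in sequentially. G \<subseteq> B n"
      using G(1,2) Union \<open>incseq B\<close> by (intro eventually_finite_subset_incseq) auto
    then show "\<forall>\<^sub>F n in sequentially. y < infsum f (B n)"
    proof (rule eventually_mono)
      fix n assume "G \<subseteq> B n"
      then have "sum f G \<le> infsum f (B n)"
        using G(1) smB nonneg_B by (intro finite_sum_le_infsum) auto
      with G(3) y show "y < infsum f (B n)"
        by (auto simp: dist_real_def abs_real_def split: if_splits)
    qed
  qed
qed

lemma has_sum_sum:
  fixes f :: "'k \<Rightarrow> 'a \<Rightarrow> 'b::topological_comm_monoid_add"
  assumes "finite K" "\<And>k. k \<in> K \<Longrightarrow> (f k has_sum s k) A"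
  shows "((\<lambda>a. \<Sum>k\<in>K. f k a) has_sum (\<Sum>k\<in>K. s k)) A"
  using assms
proof (induction K rule: finite_induct)
  case (insert k K)
  have "(f k has_sum s k) A" "((\<lambda>a. \<Sum>k\<in>K. f k a) has_sum sum s K) A"
    using insert by auto
  then have "((\<lambda>a. f k a + (\<Sum>k\<in>K. f k a)) has_sum (s k + sum s K)) A"
    by (rule has_sum_add)
  then show ?case using insert(1,2) by simp
qed simp

lemma cylindrical_comp: "cylindrical v f \<Longrightarrow> cylindrical v (\<lambda>x. g (f x))"
  unfolding cylindrical_def by metis

text \<open>HOL's x / 0 = 0 realises the convention 0/0 = 0 for the weights \<lambda>(v) = 0.\<close>

lemma kalikow_at_divide:
  assumes lam_nonneg: "\<forall>v\<in>V i. 0 \<le> lam i v" and lam_sum: "(lam i has_sum 1) (V i)"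
    and D_nonneg: "\<And>v x. v \<in> V i \<Longrightarrow> x \<in> confs \<inter> Y \<Longrightarrow> 0 \<le> D i v x"
    and D_cylindrical: "\<And>v. v \<in> V i \<Longrightarrow> cylindrical v (D i v)"
    and D_sum: "\<And>x. x \<in> confs \<inter> Y \<Longrightarrow> ((\<lambda>v. D i v x) has_sum phi i x) (V i)"
    and D_zero: "\<And>v x. v \<in> V i \<Longrightarrow> lam i v = 0 \<Longrightarrow> x \<in> confs \<inter> Y \<Longrightarrow> D i v x = 0"
  shows "kalikow_at V Y phi lam (\<lambda>i v x. D i v x / lam i v) i"
  unfolding kalikow_at_def
proof (intro conjI ballI)
  fix v assume v: "v \<in> V i"
  show "0 \<le> lam i v" using lam_nonneg v by blast
  show "0 \<le> D i v x / lam i v" if "x \<in> confs \<inter> Y" for x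
    using D_nonneg[OF v that] lam_nonneg v by simp
  show "cylindrical v (\<lambda>x. D i v x / lam i v)"
    by (rule cylindrical_comp[OF D_cylindrical[OF v]])
next
  fix x assume x: "x \<in> confs \<inter> Y"
  have "lam i v * (D i v x / lam i v) = D i v x" if "v \<in> V i" for v
    using D_zero[OF that _ x] by (cases "lam i v = 0") auto
  then show "((\<lambda>v. lam i v * (D i v x / lam i v)) has_sum phi i x) (V i)"
    by (intro has_sum_cong[THEN iffD1, OF _ D_sum[OF x]]) simp
qed (rule lam_sum)

locale decreasing_kernel =
  fixes g :: "real \<Rightarrow> real"
  assumes nonneg: "0 \<le> t \<Longrightarrow> 0 \<le> g t"
    and antimono: "0 \<le> s \<Longrightarrow> s \<le> t \<Longrightarrow> g t \<le> g s"
    and integrable: "set_integrable lborel {0..} g"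
begin

lemma L1norm_nonneg: "0 \<le> L1norm g"
  unfolding L1norm_def set_lebesgue_integral_def by (intro integral_nonneg_AE) auto

text \<open>Each point s of Q carries the rectangle [s - d, s) \<times> [0, g s], which lies under the graph
  of g because g is non-increasing; separation makes these rectangles disjoint.\<close>

lemma separated_sum_le_L1norm:
  assumes "0 < d" "finite Q" "Q \<subseteq> {d..}" "separated d Q"
  shows "d * sum g Q \<le> L1norm g"
proof -
  define F where "F t = (\<Sum>s\<in>Q. indicator {s - d..<s} t * g s)" for t
  have integrable_box: "integrable lborel (\<lambda>t. indicator {s - d..<s} t * g s)" for s
    by (intro integrable_mult_left integrable_real_indicator) (use \<open>0 < d\<close> in auto)
  have F_le: "F t \<le> indicator {0..} t * \<bar>g t\<bar>" for t
  proof (cases "\<exists>s\<in>Q. t \<in> {s - d..<s}")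
    case False
    then show ?thesis by (auto simp: F_def intro!: sum_nonpos)
  next
    case True
    then obtain s where s: "s \<in> Q" "t \<in> {s - d..<s}" by blast
    have "t \<notin> {s' - d..<s'}" if "s' \<in> Q" "s' \<noteq> s" for s'
      using that s \<open>separated d Q\<close> by (cases s s' rule: linorder_cases) (force simp: separated_def)+
    then have "F t = g s"
      unfolding F_def using s by (subst sum.remove[OF \<open>finite Q\<close> s(1)]) (auto intro!: sum.neutral)
    moreover have "0 \<le> t" "t \<le> s" using s \<open>Q \<subseteq> {d..}\<close> by auto
    ultimately show ?thesis using antimono[of t s] nonneg[of t] by simp
  qed
  have "d * sum g Q = (\<Sum>s\<in>Q. \<integral>t. indicator {s - d..<s} t * g s \<partial>lborel)"
    using \<open>0 < d\<close> by (simp add: sum_distrib_left mult.commute)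
  also have "\<dots> = integral\<^sup>L lborel F"
    unfolding F_def using integrable_box by (simp add: Bochner_Integration.integral_sum)
  also have "\<dots> \<le> (\<integral>t. indicator {0..} t * \<bar>g t\<bar> \<partial>lborel)"
  proof (rule integral_mono[OF _ _ F_le])
    show "integrable lborel F" unfolding F_def using integrable_box by auto
    have "integrable lborel (\<lambda>t. \<bar>indicator {0..} t * g t\<bar>)"
      using integrable unfolding set_integrable_def by (intro integrable_abs) simp
    then show "integrable lborel (\<lambda>t. indicator {0..} t * \<bar>g t\<bar>)"
      by (simp add: abs_mult)
  qed
  also have "\<dots> = L1norm g" unfolding L1norm_def set_lebesgue_integral_def by simp
  finally show ?thesis .
qed

lemma separated_window_past_sum_le:
  assumes "0 \<le> a" "separated d P"
  shows "(\<Sum>t\<in>P \<inter> {- (a + d)..<- a}. g (- t)) \<le> g a"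
proof -
  have "(\<Sum>t\<in>P \<inter> {- (a + d)..<- (a + d) + d}. g (- t)) \<le> g a"
    by (rule sum_separated_window_le[OF \<open>separated d P\<close>]) (use assms antimono nonneg in auto)
  then show ?thesis by simp
qed

text \<open>The point in [-d, 0) contributes at most g 0, the others are controlled by the integral.\<close>

lemma separated_past_sum_le:
  assumes "0 < d" "finite P" "P \<subseteq> {..<0}" "separated d P"
  shows "(\<Sum>t\<in>P. g (- t)) \<le> g 0 + L1norm g / d"
proof -
  have "(\<Sum>t\<in>P \<inter> {- d..<0}. g (- t)) \<le> g 0"
    using sum_separated_window_le[OF \<open>separated d P\<close>, of "- d" "\<lambda>t. g (- t)" "g 0"]
      antimono nonneg by auto
  moreover have "(\<Sum>t\<in>P - {- d..<0}. g (- t)) \<le> L1norm g / d"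
  proof -
    have "d * sum g (uminus ` (P - {- d..<0})) \<le> L1norm g"
      using assms by (intro separated_sum_le_L1norm separated_uminus)
        (auto intro: separated_subset)
    then show ?thesis
      using \<open>0 < d\<close> by (simp add: sum.reindex pos_le_divide_eq mult.commute)
  qed
  moreover have "(\<Sum>t\<in>P. g (- t)) = (\<Sum>t\<in>P \<inter> {- d..<0}. g (- t)) + (\<Sum>t\<in>P - {- d..<0}. g (- t))"
    using \<open>finite P\<close> by (metis sum.Int_Diff)
  ultimately show ?thesis by linarith
qed

lemma grid_sum_le:
  assumes "0 < d" "finite K" "K \<subseteq> {2..}"
  shows "(\<Sum>k\<in>K. g (real (k - 1) * d)) \<le> L1norm g / d"
proof -
  let ?grid = "\<lambda>k. real (k - 1) * d"
  have inj: "inj_on ?grid K"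
    using assms by (auto simp: inj_on_def)
  have "separated d (?grid ` K)"
  proof (unfold separated_def, intro ballI impI)
    fix s t assume "s \<in> ?grid ` K" "t \<in> ?grid ` K" "s < t"
    then obtain k l where "k \<in> K" "l \<in> K" "s = ?grid k" "t = ?grid l" "k < l"
      using \<open>0 < d\<close> by (auto simp: mult_less_cancel_right)
    then have "1 * d \<le> (real (l - 1) - real (k - 1)) * d"
      using \<open>0 < d\<close> \<open>K \<subseteq> {2..}\<close> by (intro mult_right_mono) auto
    then show "d \<le> t - s" using \<open>s = ?grid k\<close> \<open>t = ?grid l\<close> by (simp add: algebra_simps)
  qed
  then have "d * sum g (?grid ` K) \<le> L1norm g"
    using assms by (intro separated_sum_le_L1norm) auto
  then show ?thesis
    using \<open>0 < d\<close> inj by (simp add: sum.reindex pos_le_divide_eq mult.commute)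
qed

end

lemma confs_finite_window: "x \<in> confs \<Longrightarrow> finite (x j \<inter> {a..<0})"
  by (simp add: confs_def)

lemma confs_negative: "x \<in> confs \<Longrightarrow> x j \<subseteq> {..<0}"
  by (simp add: confs_def)

lemma confs_sep_separated: "x \<in> confs_sep \<delta> \<Longrightarrow> separated \<delta> (x j)"
  by (force simp: confs_sep_def separated_def)

lemma cint_eq_sum: "x \<in> confs \<Longrightarrow> cint g (x j) a = (\<Sum>t\<in>x j \<inter> {a..<0}. g (- t))"
  by (simp add: cint_def confs_finite_window)

lemma confs_last_point:
  assumes "x \<in> confs" "x i \<noteq> {}"
  obtains m where "m \<in> x i" "\<And>q. q \<in> x i \<Longrightarrow> q \<le> m"
proof -
  obtain p where p: "p \<in> x i" using assms(2) by blast
  let ?W = "x i \<inter> {p..<0}"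
  have W: "finite ?W" "p \<in> ?W"
    using p confs_finite_window[OF assms(1)] confs_negative[OF assms(1)] by auto
  show ?thesis
  proof (rule that[of "Max ?W"])
    show "Max ?W \<in> x i" using Max_in[OF W(1)] W(2) by blast
    show "q \<le> Max ?W" if "q \<in> x i" for q
    proof (cases "p \<le> q")
      case True
      then show ?thesis using that confs_negative[OF assms(1), of i] by (intro Max_ge[OF W(1)]) auto
    next
      case False
      then show ?thesis using Max_ge[OF W] by linarith
    qed
  qed
qed

lemma refr_eq:
  assumes "x \<in> confs"
  shows "refr \<delta> x i = (if x i \<inter> {- \<delta>..<0} = {} then 1 else 0)"
proof (cases "x i = {}")
  case False
  then obtain m where m: "m \<in> x i" "\<And>q. q \<in> x i \<Longrightarrow> q \<le> m"
    using confs_last_point[OF assms] by blast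
  then have "Sup (x i) = m" by (intro cSup_eq_maximum)
  moreover have "x i \<inter> {- \<delta>..<0} = {} \<longleftrightarrow> m < - \<delta>"
    using m confs_negative[OF assms, of i] by force
  ultimately show ?thesis using False by (simp add: refr_def age_def)
qed (simp add: refr_def age_def)

lemma refr_nonneg: "0 \<le> refr \<delta> x i"
  by (simp add: refr_def)

lemma refr_le_1: "refr \<delta> x i \<le> 1"
  by (simp add: refr_def)

locale hawkes_kernel =
  fixes h :: "'i \<Rightarrow> 'i \<Rightarrow> real \<Rightarrow> real" and \<delta> :: real
  assumes delta_pos: "0 < \<delta>"
    and kernel: "\<And>i j. decreasing_kernel (h i j)"
    and L1norm_summable: "\<And>i. (\<lambda>j. L1norm (h i j)) summable_on UNIV"
    and at_zero_summable: "\<And>i. (\<lambda>j. h i j 0) summable_on UNIV"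
begin

sublocale decreasing_kernel "h i j" for i j
  by (rule kernel)

definition cint_bound :: "'i \<Rightarrow> 'i \<Rightarrow> real" where
  "cint_bound i j = h i j 0 + L1norm (h i j) / \<delta>"

lemma cint_bound_nonneg: "0 \<le> cint_bound i j"
  unfolding cint_bound_def using nonneg[of 0 i j] L1norm_nonneg[of i j] delta_pos by simp

lemma cint_bound_summable: "cint_bound i summable_on A"
proof -
  have "(\<lambda>j. h i j 0 + L1norm (h i j) * inverse \<delta>) summable_on UNIV"
    by (intro summable_on_add at_zero_summable summable_on_cmult_left L1norm_summable)
  then show ?thesis unfolding cint_bound_def[abs_def] divide_inverse
    by (rule summable_on_subset_banach) simp
qed

lemma infsum_cint_bound:
  "(\<Sum>\<^sub>\<infinity>j. cint_bound i j) = (\<Sum>\<^sub>\<infinity>j. h i j 0) + (\<Sum>\<^sub>\<infinity>j. L1norm (h i j)) / \<delta>"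
  using infsum_add[OF at_zero_summable summable_on_cmult_left[OF L1norm_summable]]
    infsum_cmult_left[OF L1norm_summable]
  by (simp add: cint_bound_def[abs_def] divide_inverse)

lemma kernel_summable: "0 \<le> a \<Longrightarrow> (\<lambda>j. h i j a) summable_on A"
  by (rule summable_on_comparison_test[OF summable_on_subset_banach[OF at_zero_summable]])
    (auto intro: antimono nonneg)

lemma cint_nonneg: "x \<in> confs \<Longrightarrow> 0 \<le> cint (h i j) (x j) a"
  using confs_negative[of x j] by (auto simp: cint_eq_sum intro!: sum_nonneg nonneg)

lemma cint_le_bound:
  assumes "x \<in> confs \<inter> confs_sep \<delta>"
  shows "cint (h i j) (x j) a \<le> cint_bound i j"
  unfolding cint_bound_def using assms delta_pos confs_negative[of x j]
  by (auto simp: cint_eq_sum confs_finite_window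
      intro!: separated_past_sum_le separated_subset[OF confs_sep_separated])

lemma cint_summable:
  assumes "x \<in> confs \<inter> confs_sep \<delta>"
  shows "(\<lambda>j. cint (h i j) (x j) a) summable_on A"
  by (rule summable_on_comparison_test[OF cint_bound_summable])
    (use assms cint_le_bound cint_nonneg in auto)

lemma cint_antimono:
  assumes "x \<in> confs" "a \<le> b"
  shows "cint (h i j) (x j) b \<le> cint (h i j) (x j) a"
  using assms confs_negative[OF assms(1), of j]
  by (simp add: cint_eq_sum, intro sum_mono2) (auto simp: confs_finite_window intro!: nonneg)

lemma cint_extend_le:
  assumes x: "x \<in> confs \<inter> confs_sep \<delta>" and "0 \<le> a"
  shows "cint (h i j) (x j) (- (a + \<delta>)) \<le> cint (h i j) (x j) (- a) + h i j a"
proof -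
  have split: "x j \<inter> {- (a + \<delta>)..<0} = (x j \<inter> {- (a + \<delta>)..<- a}) \<union> (x j \<inter> {- a..<0})"
    using \<open>0 \<le> a\<close> delta_pos by auto
  have "finite (x j \<inter> {- (a + \<delta>)..<- a})"
    using confs_finite_window[of x j "- (a + \<delta>)"] x \<open>0 \<le> a\<close> by (auto elim: finite_subset[rotated])
  then have "cint (h i j) (x j) (- (a + \<delta>))
      = (\<Sum>t\<in>x j \<inter> {- (a + \<delta>)..<- a}. h i j (- t)) + cint (h i j) (x j) (- a)"
    using x unfolding cint_eq_sum[OF IntD1[OF x]] split
    by (intro sum.union_disjoint) (auto simp: confs_finite_window)
  also have "(\<Sum>t\<in>x j \<inter> {- (a + \<delta>)..<- a}. h i j (- t)) \<le> h i j a"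
    using x \<open>0 \<le> a\<close> by (intro separated_window_past_sum_le confs_sep_separated) auto
  finally show ?thesis by simp
qed

lemma cint_all_bounds:
  assumes x: "x \<in> confs \<inter> confs_sep \<delta>"
  shows "(\<lambda>t. h i j (- t)) summable_on (x j \<inter> {..<0})"
    and "0 \<le> cint_all (h i j) (x j)" and "cint_all (h i j) (x j) \<le> cint_bound i j"
proof -
  have finite_le: "sum (\<lambda>t. h i j (- t)) F \<le> cint_bound i j" if "finite F" "F \<subseteq> x j \<inter> {..<0}" for F
    unfolding cint_bound_def using that x delta_pos
    by (intro separated_past_sum_le separated_subset[OF confs_sep_separated]) auto
  show summable: "(\<lambda>t. h i j (- t)) summable_on (x j \<inter> {..<0})"
    by (rule nonneg_bdd_above_summable_on) (auto intro!: nonneg bdd_aboveI2 finite_le)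
  show "0 \<le> cint_all (h i j) (x j)"
    unfolding cint_all_def by (rule infsum_nonneg) (simp add: nonneg)
  show "cint_all (h i j) (x j) \<le> cint_bound i j"
    unfolding cint_all_def by (rule infsum_le_finite_sums[OF summable finite_le])
qed

end

locale nested_hawkes = hawkes_kernel h \<delta>
  for h :: "'i \<Rightarrow> 'i \<Rightarrow> real \<Rightarrow> real" and \<delta> :: real +
  fixes \<omega> :: "'i \<Rightarrow> nat \<Rightarrow> 'i set" and \<psi> :: "'i \<Rightarrow> real \<Rightarrow> real"
  assumes omega_1: "\<omega> i 1 = {i}"
    and omega_mono: "1 \<le> k \<Longrightarrow> \<omega> i k \<subseteq> \<omega> i (Suc k)"
    and omega_Union: "(\<Union>k\<in>{1..}. \<omega> i k) = UNIV"
    and psi_mono: "mono (\<psi> i)"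
    and psi_nonneg: "0 \<le> \<psi> i u"
    and psi_cont: "continuous_on UNIV (\<psi> i)"
begin

lemma omega_chain:
  assumes "1 \<le> m" "m \<le> n"
  shows "\<omega> i m \<subseteq> \<omega> i n"
  using assms(2)
proof (induction n rule: dec_induct)
  case (step n)
  then show ?case using omega_mono[of n i] assms(1) by auto
qed simp

lemma mem_omega: "1 \<le> k \<Longrightarrow> i \<in> \<omega> i k"
  using omega_chain[of 1 k i] omega_1[of i] by auto

lemma nbh_idx_nbh:
  assumes "1 \<le> k"
  shows "nbh_idx \<omega> \<delta> i (nbh \<omega> \<delta> i k) = k"
  unfolding nbh_idx_def
proof (rule the_equality)
  fix l assume l: "1 \<le> l \<and> nbh \<omega> \<delta> i k = nbh \<omega> \<delta> i l"
  have "\<omega> i k \<noteq> {}" "\<omega> i l \<noteq> {}" using mem_omega assms l by blast+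
  then have "{- (real k * \<delta>)..<0} = {- (real l * \<delta>)..<0}"
    using l unfolding nbh_def times_eq_iff by auto
  then have "real k * \<delta> = real l * \<delta>"
    using assms l delta_pos by (simp add: atLeastLessThan_eq_iff)
  then show "l = k" using delta_pos by simp
qed (use assms in simp)

lemma has_sum_Vnest_iff:
  "(f has_sum s) (Vnest \<omega> \<delta> i) \<longleftrightarrow> ((\<lambda>k. f (nbh \<omega> \<delta> i k)) has_sum s) {1..}"
proof -
  have "inj_on (nbh \<omega> \<delta> i) {1..}"
    by (rule inj_on_inverseI[of _ "nbh_idx \<omega> \<delta> i"]) (simp add: nbh_idx_nbh)
  then show ?thesis unfolding Vnest_def by (simp add: has_sum_reindex o_def)
qed

lemma Delta_v_nbh: "1 \<le> k \<Longrightarrow> Delta_v \<psi> h \<omega> \<delta> i (nbh \<omega> \<delta> i k) = Delta \<psi> h \<omega> \<delta> i k"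
  by (simp add: Delta_v_def nbh_idx_nbh fun_eq_iff)

lemma Ssum_mono:
  assumes x: "x \<in> confs \<inter> confs_sep \<delta>" and "1 \<le> k"
  shows "Ssum h \<omega> \<delta> i k x \<le> Ssum h \<omega> \<delta> i (Suc k) x"
  unfolding Ssum_def
proof (rule infsum_mono_neutral[OF cint_summable[OF x] cint_summable[OF x]])
  show "cint (h i j) (x j) (- (real k * \<delta>)) \<le> cint (h i j) (x j) (- (real (Suc k) * \<delta>))" for j
    using x delta_pos by (intro cint_antimono) (auto simp: algebra_simps)
  show "cint (h i j) (x j) (- (real k * \<delta>)) \<le> 0" if "j \<in> \<omega> i k - \<omega> i (Suc k)" for j
    using that omega_mono[OF \<open>1 \<le> k\<close>] by auto
  show "0 \<le> cint (h i j) (x j) (- (real (Suc k) * \<delta>))" for j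
    using x by (intro cint_nonneg) auto
qed

lemma Ssum_1:
  assumes "x \<in> confs" "refr \<delta> x i = 1"
  shows "Ssum h \<omega> \<delta> i 1 x = 0"
proof -
  have "x i \<inter> {- \<delta>..<0} = {}" using assms refr_eq[of x \<delta> i] by (auto split: if_splits)
  then show ?thesis unfolding Ssum_def omega_1 by (simp add: cint_def)
qed

lemma Delta_nonneg:
  assumes x: "x \<in> confs \<inter> confs_sep \<delta>" and "1 \<le> k"
  shows "0 \<le> Delta \<psi> h \<omega> \<delta> i k x"
proof (cases "k = 1")
  case False
  then have "Ssum h \<omega> \<delta> i (k - 1) x \<le> Ssum h \<omega> \<delta> i k x"
    using Ssum_mono[OF x, of "k - 1" i] \<open>1 \<le> k\<close> by simp
  then have "\<psi> i (Ssum h \<omega> \<delta> i (k - 1) x) \<le> \<psi> i (Ssum h \<omega> \<delta> i k x)"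
    using psi_mono by (simp add: monoD)
  then show ?thesis using False by (simp add: Delta_def refr_nonneg)
qed (simp add: Delta_def psi_nonneg refr_nonneg)

text \<open>Both factors of \<Delta>^i_k only see points of types in \<omega>^i_k: the age factor looks at type i
  in [-\<delta>, 0), and \<omega>^i_{k-1} \<subseteq> \<omega>^i_k.\<close>

lemma Delta_cylindrical:
  assumes "1 \<le> k"
  shows "cylindrical (nbh \<omega> \<delta> i k) (Delta \<psi> h \<omega> \<delta> i k)"
  unfolding cylindrical_def
proof (intro ballI impI)
  fix x y :: "'i conf" assume x: "x \<in> confs" and y: "y \<in> confs"
    and eq: "pts x \<inter> nbh \<omega> \<delta> i k = pts y \<inter> nbh \<omega> \<delta> i k"
  have window_eq: "x j \<inter> {a..<0} = y j \<inter> {a..<0}" if "j \<in> \<omega> i k" "- (real k * \<delta>) \<le> a" for j a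
  proof -
    have "t \<in> x j \<longleftrightarrow> t \<in> y j" if "a \<le> t" "t < 0" for t
    proof -
      have "(j, t) \<in> nbh \<omega> \<delta> i k"
        using \<open>j \<in> \<omega> i k\<close> \<open>- (real k * \<delta>) \<le> a\<close> that by (simp add: nbh_def)
      then have "(j, t) \<in> pts x \<longleftrightarrow> (j, t) \<in> pts y" using eq by blast
      then show ?thesis by (simp add: pts_def)
    qed
    then show ?thesis by auto
  qed
  have "refr \<delta> x i = refr \<delta> y i"
    using window_eq[OF mem_omega[OF assms], of "- \<delta>"] assms delta_pos
    by (simp add: refr_eq[OF x] refr_eq[OF y])
  moreover have "Ssum h \<omega> \<delta> i m x = Ssum h \<omega> \<delta> i m y" if "1 \<le> m" "m \<le> k" for m
  proof -
    have "- (real k * \<delta>) \<le> - (real m * \<delta>)" using that delta_pos by (simp add: mult_right_mono)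
    then have "x j \<inter> {- (real m * \<delta>)..<0} = y j \<inter> {- (real m * \<delta>)..<0}" if "j \<in> \<omega> i m" for j
      using that omega_chain[OF \<open>1 \<le> m\<close> \<open>m \<le> k\<close>] by (intro window_eq) auto
    then show ?thesis unfolding Ssum_def cint_def by (intro infsum_cong) simp
  qed
  ultimately show "Delta \<psi> h \<omega> \<delta> i k x = Delta \<psi> h \<omega> \<delta> i k y"
    using assms by (cases "k = 1") (auto simp: Delta_def)
qed

lemma incseq_nbh: "incseq (nbh \<omega> \<delta> i)"
proof (rule monoI)
  fix m n :: nat assume "m \<le> n"
  then have "- (real n * \<delta>) \<le> - (real m * \<delta>)" using delta_pos by (simp add: mult_right_mono)
  then show "nbh \<omega> \<delta> i m \<subseteq> nbh \<omega> \<delta> i n"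
    using omega_chain[OF _ \<open>m \<le> n\<close>, of i] by (cases "m = 0") (auto simp: nbh_def)
qed

lemma Union_nbh: "(\<Union>n. nbh \<omega> \<delta> i n) = UNIV \<times> {..<0}"
proof
  show "UNIV \<times> {..<0} \<subseteq> (\<Union>n. nbh \<omega> \<delta> i n)"
  proof
    fix a :: "'i \<times> real" assume "a \<in> UNIV \<times> {..<0}"
    then obtain j t where a: "a = (j, t)" "t < 0" by auto
    obtain k where k: "1 \<le> k" "j \<in> \<omega> i k" using omega_Union[of i] by blast
    obtain n where n: "- t < real n * \<delta>" using ex_less_of_nat_mult[OF delta_pos] by blast
    have "real n * \<delta> \<le> real (max k n) * \<delta>" using delta_pos by (intro mult_right_mono) auto
    then have "a \<in> nbh \<omega> \<delta> i (max k n)"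
      using a n k omega_chain[OF k(1) max.cobounded1] by (auto simp: nbh_def)
    then show "a \<in> (\<Union>n. nbh \<omega> \<delta> i n)" by blast
  qed
qed (auto simp: nbh_def)

text \<open>S^i_n is the sum of h^i_j(-t) over the marked points (j, t) of x in v^i_n, and these
  neighbourhoods increase and exhaust I \<times> (-\<infinity>, 0).\<close>

lemma Ssum_LIMSEQ:
  assumes x: "x \<in> confs \<inter> confs_sep \<delta>"
  shows "(\<lambda>n. Ssum h \<omega> \<delta> i n x) \<longlonglongrightarrow> (\<Sum>\<^sub>\<infinity>j. cint_all (h i j) (x j))"
proof -
  define F where "F = (\<lambda>(j, t). h i j (- t))"
  have pts_eq: "pts x = Sigma UNIV (\<lambda>j. x j \<inter> {..<0})"
    using confs_negative[OF IntD1[OF x]] by (auto simp: pts_def)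
  have "(\<lambda>j. cint_all (h i j) (x j)) summable_on UNIV"
    by (rule summable_on_comparison_test[OF cint_bound_summable]) (use cint_all_bounds[OF x] in auto)
  then have summable: "F summable_on pts x"
    unfolding pts_eq F_def using cint_all_bounds(1,2)[OF x]
    by (intro summable_on_SigmaI[where g = "\<lambda>j. cint_all (h i j) (x j)"])
      (auto simp: cint_all_def intro!: nonneg)
  have F_nonneg: "0 \<le> F a" if "a \<in> pts x" for a
    using that unfolding pts_eq F_def by (auto intro!: nonneg)
  have limit_eq: "(\<Sum>\<^sub>\<infinity>j. cint_all (h i j) (x j)) = infsum F (pts x)"
    using infsum_Sigma_banach[of F UNIV] summable unfolding pts_eq by (simp add: F_def cint_all_def)
  have Ssum_eq: "Ssum h \<omega> \<delta> i n x = infsum F (pts x \<inter> nbh \<omega> \<delta> i n)" for n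
  proof -
    have window: "pts x \<inter> nbh \<omega> \<delta> i n = Sigma (\<omega> i n) (\<lambda>j. x j \<inter> {- (real n * \<delta>)..<0})"
      by (auto simp: pts_def nbh_def)
    have "F summable_on pts x \<inter> nbh \<omega> \<delta> i n"
      using summable by (rule summable_on_subset_banach) simp
    then show ?thesis
      unfolding Ssum_def cint_def window using infsum_Sigma_banach[of F "\<omega> i n"] by (simp add: F_def)
  qed
  have "incseq (\<lambda>n. pts x \<inter> nbh \<omega> \<delta> i n)"
    using incseq_nbh[of i] by (auto simp: incseq_def)
  moreover have "(\<Union>n. pts x \<inter> nbh \<omega> \<delta> i n) = pts x"
    using Union_nbh[of i] pts_eq by auto
  ultimately show ?thesis
    unfolding limit_eq Ssum_eq by (intro infsum_incseq_Union_LIMSEQ[OF summable F_nonneg])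
qed

lemma Delta_telescope:
  assumes x: "x \<in> confs" and "1 \<le> n"
  shows "(\<Sum>k=1..n. Delta \<psi> h \<omega> \<delta> i k x) = \<psi> i (Ssum h \<omega> \<delta> i n x) * refr \<delta> x i"
  using \<open>1 \<le> n\<close>
proof (induction n rule: dec_induct)
  case base
  show ?case
    using Ssum_1[OF x] by (cases "refr \<delta> x i = 1") (auto simp: Delta_def refr_def)
next
  case (step n)
  then show ?case by (simp add: Delta_def algebra_simps)
qed

lemma Delta_has_sum:
  assumes x: "x \<in> confs \<inter> confs_sep \<delta>"
  shows "((\<lambda>k. Delta \<psi> h \<omega> \<delta> i k x) has_sum hawkes_phi \<psi> h \<delta> i x) {1..}"
proof -
  let ?S = "\<Sum>\<^sub>\<infinity>j. cint_all (h i j) (x j)"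
  have "isCont (\<psi> i) ?S"
    using psi_cont continuous_on_eq_continuous_at by blast
  then have "(\<lambda>n. \<psi> i (Ssum h \<omega> \<delta> i n x) * refr \<delta> x i) \<longlonglongrightarrow> \<psi> i ?S * refr \<delta> x i"
    by (intro tendsto_mult_right isCont_tendsto_compose[OF _ Ssum_LIMSEQ[OF x]])
  then have "(\<lambda>n. \<Sum>k<n. Delta \<psi> h \<omega> \<delta> i (Suc k) x) \<longlonglongrightarrow> hawkes_phi \<psi> h \<delta> i x"
    unfolding hawkes_phi_def
  proof (rule Lim_transform_eventually)
    show "\<forall>\<^sub>F n in sequentially.
        \<psi> i (Ssum h \<omega> \<delta> i n x) * refr \<delta> x i = (\<Sum>k<n. Delta \<psi> h \<omega> \<delta> i (Suc k) x)"
      unfolding eventually_sequentially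
      using Delta_telescope[OF IntD1[OF x]] sum_bounds_lt_plus1[of "\<lambda>k. Delta \<psi> h \<omega> \<delta> i k x"]
      by (intro exI[of _ 1] allI impI) simp
  qed
  then have "((\<lambda>k. Delta \<psi> h \<omega> \<delta> i (Suc k) x) has_sum hawkes_phi \<psi> h \<delta> i x) UNIV"
    by (intro sums_nonneg_imp_has_sum Delta_nonneg[OF x]) (auto simp: sums_def)
  moreover have "range Suc = {1..}"
    by (auto simp: image_iff) (metis Suc_pred' less_eq_Suc_le)
  ultimately show ?thesis
    using has_sum_reindex[of Suc UNIV "\<lambda>k. Delta \<psi> h \<omega> \<delta> i k x"] by (simp add: o_def)
qed

lemma Gbar_eq:
  assumes "2 \<le> k"
  shows "Gbar \<psi> h \<omega> \<delta> L i k = L * (infsum (cint_bound i) (\<omega> i k - \<omega> i (k - 1))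
      + infsum (\<lambda>j. h i j (real (k - 1) * \<delta>)) (\<omega> i (k - 1)))"
  using assms by (simp add: Gbar_def cint_bound_def[abs_def])

lemma Gbar_nonneg:
  assumes "0 \<le> L" "1 \<le> k"
  shows "0 \<le> Gbar \<psi> h \<omega> \<delta> L i k"
  using assms delta_pos
  by (cases "k = 1") (auto simp: Gbar_eq psi_nonneg Gbar_def cint_bound_nonneg
      intro!: mult_nonneg_nonneg add_nonneg_nonneg infsum_nonneg nonneg divide_nonneg_pos
        L1norm_nonneg)

text \<open>New types j \<in> \<omega>^i_k - \<omega>^i_{k-1} contribute at most their full bound; old types only gain
  the points in the extra window [-k\<delta>, -(k-1)\<delta>), of which there is at most one.\<close>

lemma Ssum_increment_le:
  assumes x: "x \<in> confs \<inter> confs_sep \<delta>" and "2 \<le> k"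
  shows "Ssum h \<omega> \<delta> i k x - Ssum h \<omega> \<delta> i (k - 1) x
    \<le> infsum (cint_bound i) (\<omega> i k - \<omega> i (k - 1)) + infsum (\<lambda>j. h i j (real (k - 1) * \<delta>)) (\<omega> i (k - 1))"
proof -
  define m where "m = k - 1"
  define c where "c a j = cint (h i j) (x j) a" for a j
  have m: "1 \<le> m" "k = Suc m" using \<open>2 \<le> k\<close> by (auto simp: m_def)
  have c_summable: "c a summable_on A" for a A unfolding c_def by (rule cint_summable[OF x])
  have md: "0 \<le> real m * \<delta>" using delta_pos by simp
  have "(\<omega> i k - \<omega> i m) \<inter> \<omega> i m = {}" by blast
  from infsum_Un_disjoint[OF c_summable c_summable this]
  have "Ssum h \<omega> \<delta> i k x = infsum (c (- (real k * \<delta>))) (\<omega> i k - \<omega> i m)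
      + infsum (c (- (real k * \<delta>))) (\<omega> i m)"
    unfolding Ssum_def c_def[symmetric] using omega_mono[OF m(1), of i] m(2) by (simp add: Un_absorb2)
  moreover have "infsum (c (- (real k * \<delta>))) (\<omega> i k - \<omega> i m) \<le> infsum (cint_bound i) (\<omega> i k - \<omega> i m)"
    by (rule infsum_mono[OF c_summable cint_bound_summable]) (unfold c_def, rule cint_le_bound[OF x])
  moreover have "infsum (c (- (real k * \<delta>))) (\<omega> i m)
      \<le> infsum (\<lambda>j. c (- (real m * \<delta>)) j + h i j (real m * \<delta>)) (\<omega> i m)"
    using cint_extend_le[OF x md] m(2)
    by (intro infsum_mono[OF c_summable summable_on_add[OF c_summable kernel_summable[OF md]]])
      (simp add: c_def algebra_simps)
  moreover have "\<dots> = Ssum h \<omega> \<delta> i m x + infsum (\<lambda>j. h i j (real m * \<delta>)) (\<omega> i m)"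
    unfolding Ssum_def c_def by (rule infsum_add[OF c_summable[unfolded c_def] kernel_summable[OF md]])
  ultimately show ?thesis by (simp add: m_def)
qed

lemma Delta_le_Gbar:
  assumes lip: "L-lipschitz_on UNIV (\<psi> i)" and x: "x \<in> confs \<inter> confs_sep \<delta>" and "1 \<le> k"
  shows "Delta \<psi> h \<omega> \<delta> i k x \<le> Gbar \<psi> h \<omega> \<delta> L i k"
proof (cases "k = 1")
  case False
  then have "2 \<le> k" using \<open>1 \<le> k\<close> by simp
  let ?d = "\<psi> i (Ssum h \<omega> \<delta> i k x) - \<psi> i (Ssum h \<omega> \<delta> i (k - 1) x)"
  have "0 \<le> ?d"
    using Ssum_mono[OF x, of "k - 1" i] \<open>2 \<le> k\<close> psi_mono by (simp add: monoD)
  then have "Delta \<psi> h \<omega> \<delta> i k x \<le> ?d"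
    using False by (simp add: Delta_def mult_left_le refr_le_1)
  also have "\<dots> \<le> \<bar>?d\<bar>" by simp
  also have "\<dots> \<le> L * \<bar>Ssum h \<omega> \<delta> i k x - Ssum h \<omega> \<delta> i (k - 1) x\<bar>"
    using lipschitz_onD[OF lip] by (simp add: dist_real_def)
  also have "\<dots> \<le> Gbar \<psi> h \<omega> \<delta> L i k"
    unfolding Gbar_eq[OF \<open>2 \<le> k\<close>]
    using Ssum_mono[OF x, of "k - 1" i] Ssum_increment_le[OF x \<open>2 \<le> k\<close>, of i] \<open>2 \<le> k\<close>
      lipschitz_on_nonneg[OF lip]
    by (intro mult_left_mono) auto
  finally show ?thesis .
qed (simp add: Delta_def Gbar_def mult_left_le refr_le_1 psi_nonneg)

lemma sum_new_types_bound_le: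
  assumes "finite K" "K \<subseteq> {2..}"
  shows "(\<Sum>k\<in>K. infsum (cint_bound i) (\<omega> i k - \<omega> i (k - 1))) \<le> (\<Sum>\<^sub>\<infinity>j. cint_bound i j)"
proof -
  have "(\<omega> i k - \<omega> i (k - 1)) \<inter> (\<omega> i l - \<omega> i (l - 1)) = {}" if "k \<in> K" "l \<in> K" "k < l" for k l
  proof -
    have "\<omega> i k \<subseteq> \<omega> i (l - 1)" using that assms(2) by (intro omega_chain) auto
    then show ?thesis by blast
  qed
  then have "(\<Sum>k\<in>K. infsum (cint_bound i) (\<omega> i k - \<omega> i (k - 1)))
      = infsum (cint_bound i) (\<Union>k\<in>K. \<omega> i k - \<omega> i (k - 1))"
    by (intro sum_infsum[OF \<open>finite K\<close> cint_bound_summable]) (metis Int_commute linorder_neqE_nat)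
  also have "\<dots> \<le> (\<Sum>\<^sub>\<infinity>j. cint_bound i j)"
    by (intro infsum_mono2 cint_bound_summable) (auto simp: cint_bound_nonneg)
  finally show ?thesis .
qed

lemma sum_old_types_bound_le:
  assumes "finite K" "K \<subseteq> {2..}"
  shows "(\<Sum>k\<in>K. infsum (\<lambda>j. h i j (real (k - 1) * \<delta>)) (\<omega> i (k - 1)))
    \<le> (\<Sum>\<^sub>\<infinity>j. L1norm (h i j)) / \<delta>"
proof -
  have "(\<Sum>k\<in>K. infsum (\<lambda>j. h i j (real (k - 1) * \<delta>)) (\<omega> i (k - 1)))
      \<le> (\<Sum>k\<in>K. infsum (\<lambda>j. h i j (real (k - 1) * \<delta>)) UNIV)"
    using delta_pos by (intro sum_mono infsum_mono2 kernel_summable) (auto intro: nonneg)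
  also have "\<dots> \<le> (\<Sum>\<^sub>\<infinity>j. L1norm (h i j)) / \<delta>"
  proof (rule has_sum_mono)
    show "((\<lambda>j. \<Sum>k\<in>K. h i j (real (k - 1) * \<delta>))
        has_sum (\<Sum>k\<in>K. infsum (\<lambda>j. h i j (real (k - 1) * \<delta>)) UNIV)) UNIV"
      using delta_pos by (intro has_sum_sum[OF \<open>finite K\<close>] has_sum_infsum kernel_summable) auto
    show "((\<lambda>j. L1norm (h i j) / \<delta>) has_sum (\<Sum>\<^sub>\<infinity>j. L1norm (h i j)) / \<delta>) UNIV"
      by (rule has_sum_divide_const[OF has_sum_infsum[OF L1norm_summable]])
    show "(\<Sum>k\<in>K. h i j (real (k - 1) * \<delta>)) \<le> L1norm (h i j) / \<delta>" for j
      using delta_pos assms by (rule grid_sum_le)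
  qed
  finally show ?thesis .
qed

lemma sum_Gbar_le:
  assumes "0 \<le> L" "finite K" "K \<subseteq> {1..}"
  shows "sum (Gbar \<psi> h \<omega> \<delta> L i) K
    \<le> \<psi> i 0 + 2 * L * ((\<Sum>\<^sub>\<infinity>j. h i j 0) + (\<Sum>\<^sub>\<infinity>j. L1norm (h i j)) / \<delta>)"
proof -
  let ?K = "K - {1}"
  have K: "finite ?K" "?K \<subseteq> {2..}" using assms by auto
  have "sum (Gbar \<psi> h \<omega> \<delta> L i) K \<le> \<psi> i 0 + sum (Gbar \<psi> h \<omega> \<delta> L i) ?K"
    using psi_nonneg[of i 0] \<open>finite K\<close>
    by (cases "1 \<in> K") (auto simp: sum.remove Gbar_def)
  also have "sum (Gbar \<psi> h \<omega> \<delta> L i) ?K = (\<Sum>k\<in>?K. L * (infsum (cint_bound i) (\<omega> i k - \<omega> i (k - 1))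
      + infsum (\<lambda>j. h i j (real (k - 1) * \<delta>)) (\<omega> i (k - 1))))"
    using K(2) by (intro sum.cong) (auto simp: Gbar_eq)
  also have "\<dots> = L * ((\<Sum>k\<in>?K. infsum (cint_bound i) (\<omega> i k - \<omega> i (k - 1)))
      + (\<Sum>k\<in>?K. infsum (\<lambda>j. h i j (real (k - 1) * \<delta>)) (\<omega> i (k - 1))))"
    by (simp add: sum_distrib_left sum.distrib distrib_left)
  also have "\<dots> \<le> L * ((\<Sum>\<^sub>\<infinity>j. h i j 0) + (\<Sum>\<^sub>\<infinity>j. L1norm (h i j)) / \<delta>
      + (\<Sum>\<^sub>\<infinity>j. L1norm (h i j)) / \<delta>)"
    using sum_new_types_bound_le[OF K, of i] sum_old_types_bound_le[OF K, of i] \<open>0 \<le> L\<close>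
    by (intro mult_left_mono) (auto simp: infsum_cint_bound)
  also have "\<dots> \<le> 2 * L * ((\<Sum>\<^sub>\<infinity>j. h i j 0) + (\<Sum>\<^sub>\<infinity>j. L1norm (h i j)) / \<delta>)"
    using \<open>0 \<le> L\<close> infsum_nonneg[of UNIV "\<lambda>j. h i j 0"] nonneg[of 0 i]
    by (simp add: algebra_simps)
  finally show ?thesis by simp
qed

lemma Gbar_summable_le:
  assumes "0 \<le> L"
  shows "Gbar \<psi> h \<omega> \<delta> L i summable_on {1..} \<and>
    (\<Sum>\<^sub>\<infinity>k\<in>{1..}. Gbar \<psi> h \<omega> \<delta> L i k)
      \<le> \<psi> i 0 + 2 * L * ((\<Sum>\<^sub>\<infinity>j. h i j 0) + (\<Sum>\<^sub>\<infinity>j. L1norm (h i j)) / \<delta>)"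
proof
  show summable: "Gbar \<psi> h \<omega> \<delta> L i summable_on {1..}"
    using sum_Gbar_le[OF assms] Gbar_nonneg[OF assms]
    by (intro nonneg_bdd_above_summable_on bdd_aboveI2) auto
  show "(\<Sum>\<^sub>\<infinity>k\<in>{1..}. Gbar \<psi> h \<omega> \<delta> L i k)
      \<le> \<psi> i 0 + 2 * L * ((\<Sum>\<^sub>\<infinity>j. h i j 0) + (\<Sum>\<^sub>\<infinity>j. L1norm (h i j)) / \<delta>)"
    using sum_Gbar_le[OF assms] by (intro infsum_le_finite_sums[OF summable]) auto
qed

lemma Delta_v_nonneg:
  assumes "v \<in> Vnest \<omega> \<delta> i" "x \<in> confs \<inter> confs_sep \<delta>"
  shows "0 \<le> Delta_v \<psi> h \<omega> \<delta> i v x"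
  using assms Delta_nonneg by (auto simp: Vnest_def Delta_v_nbh)

lemma Delta_v_cylindrical:
  assumes "v \<in> Vnest \<omega> \<delta> i"
  shows "cylindrical v (Delta_v \<psi> h \<omega> \<delta> i v)"
  using assms Delta_cylindrical by (auto simp: Vnest_def Delta_v_nbh)

lemma Delta_v_has_sum:
  assumes "x \<in> confs \<inter> confs_sep \<delta>"
  shows "((\<lambda>v. Delta_v \<psi> h \<omega> \<delta> i v x) has_sum hawkes_phi \<psi> h \<delta> i x) (Vnest \<omega> \<delta> i)"
  unfolding has_sum_Vnest_iff
  by (rule has_sum_cong[THEN iffD1, OF _ Delta_has_sum[OF assms]]) (simp add: Delta_v_nbh)

lemma kalikow_at_Delta:
  assumes "\<forall>v\<in>Vnest \<omega> \<delta> i. 0 \<le> lam i v" "(lam i has_sum 1) (Vnest \<omega> \<delta> i)"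
    and lam_zero: "\<forall>v\<in>Vnest \<omega> \<delta> i. lam i v = 0 \<longrightarrow>
      (SUP x\<in>confs \<inter> confs_sep \<delta>. ereal (Delta_v \<psi> h \<omega> \<delta> i v x)) = 0"
  shows "kalikow_at (Vnest \<omega> \<delta>) (confs_sep \<delta>) (hawkes_phi \<psi> h \<delta>) lam
    (\<lambda>i v x. Delta_v \<psi> h \<omega> \<delta> i v x / lam i v) i"
proof (rule kalikow_at_divide)
  fix v and x :: "'i conf"
  assume v: "v \<in> Vnest \<omega> \<delta> i" and "lam i v = 0" and x: "x \<in> confs \<inter> confs_sep \<delta>"
  then have "ereal (Delta_v \<psi> h \<omega> \<delta> i v x) \<le> 0"
    using lam_zero SUP_upper[OF x, of "\<lambda>x. ereal (Delta_v \<psi> h \<omega> \<delta> i v x)"] by simp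
  then show "Delta_v \<psi> h \<omega> \<delta> i v x = 0" using Delta_v_nonneg[OF v x] by simp
qed (use assms(1,2) in \<open>auto intro: Delta_v_nonneg Delta_v_cylindrical Delta_v_has_sum\<close>)

context
  fixes L :: real and \<Gamma> :: "'i \<Rightarrow> nat \<Rightarrow> real"
  assumes lipschitz: "\<And>i. L-lipschitz_on UNIV (\<psi> i)"
    and Gbar_le_Gamma: "\<And>i k. 1 \<le> k \<Longrightarrow> Gbar \<psi> h \<omega> \<delta> L i k \<le> \<Gamma> i k"
    and Gamma_summable: "\<And>i. \<Gamma> i summable_on {1..}"
begin

lemma Delta_le_Gamma:
  "x \<in> confs \<inter> confs_sep \<delta> \<Longrightarrow> 1 \<le> k \<Longrightarrow> Delta \<psi> h \<omega> \<delta> i k x \<le> \<Gamma> i k"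
  using Delta_le_Gbar[OF lipschitz] Gbar_le_Gamma order_trans by blast

lemma Gamma_nonneg: "1 \<le> k \<Longrightarrow> 0 \<le> \<Gamma> i k"
  using Gbar_nonneg[OF lipschitz_on_nonneg[OF lipschitz]] Gbar_le_Gamma order_trans by blast

lemma SUP_Delta_le_Gamma:
  "1 \<le> k \<Longrightarrow> (SUP x\<in>confs \<inter> confs_sep \<delta>. ereal (Delta \<psi> h \<omega> \<delta> i k x)) \<le> ereal (\<Gamma> i k)"
  by (rule SUP_least) (simp add: Delta_le_Gamma)

lemma hawkes_phi_le_Gamma:
  assumes "x \<in> confs \<inter> confs_sep \<delta>"
  shows "hawkes_phi \<psi> h \<delta> i x \<le> (\<Sum>\<^sub>\<infinity>k\<in>{1..}. \<Gamma> i k)"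
  using Delta_has_sum[OF assms] has_sum_infsum[OF Gamma_summable] Delta_le_Gamma[OF assms]
  by (rule has_sum_mono) simp

lemma scaled_Delta_v_le_Gamma:
  assumes "v \<in> Vnest \<omega> \<delta> i" "x \<in> confs \<inter> confs_sep \<delta>"
  shows "(\<Sum>\<^sub>\<infinity>k\<in>{1..}. \<Gamma> i k) / \<Gamma> i (nbh_idx \<omega> \<delta> i v) * Delta_v \<psi> h \<omega> \<delta> i v x
    \<le> (\<Sum>\<^sub>\<infinity>k\<in>{1..}. \<Gamma> i k)"
proof -
  obtain k where k: "1 \<le> k" "v = nbh \<omega> \<delta> i k" using assms(1) by (auto simp: Vnest_def)
  let ?G = "\<Sum>\<^sub>\<infinity>k\<in>{1..}. \<Gamma> i k"
  have "0 \<le> ?G" by (intro infsum_nonneg Gamma_nonneg) simp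
  then have "?G / \<Gamma> i k * Delta \<psi> h \<omega> \<delta> i k x \<le> ?G / \<Gamma> i k * \<Gamma> i k"
    using Delta_le_Gamma[OF assms(2) k(1)] Gamma_nonneg[OF k(1)] by (intro mult_left_mono) auto
  also have "\<dots> \<le> ?G" using \<open>0 \<le> ?G\<close> by (cases "\<Gamma> i k = 0") simp_all
  finally show ?thesis using k by (simp add: nbh_idx_nbh Delta_v_nbh)
qed

lemma kalikow_at_Gamma:
  assumes "(\<Sum>\<^sub>\<infinity>k\<in>{1..}. \<Gamma> i k) \<noteq> 0"
  shows "kalikow_at (Vnest \<omega> \<delta>) (confs_sep \<delta>) (hawkes_phi \<psi> h \<delta>)
    (\<lambda>i v. \<Gamma> i (nbh_idx \<omega> \<delta> i v) / (\<Sum>\<^sub>\<infinity>k\<in>{1..}. \<Gamma> i k))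
    (\<lambda>i v x. (\<Sum>\<^sub>\<infinity>k\<in>{1..}. \<Gamma> i k) / \<Gamma> i (nbh_idx \<omega> \<delta> i v)
      * Delta_v \<psi> h \<omega> \<delta> i v x) i"
proof -
  let ?G = "\<lambda>i. \<Sum>\<^sub>\<infinity>k\<in>{1..}. \<Gamma> i k"
  let ?lam = "\<lambda>i v. \<Gamma> i (nbh_idx \<omega> \<delta> i v) / ?G i"
  have "0 \<le> ?G i" by (intro infsum_nonneg Gamma_nonneg) simp
  then have G_pos: "0 < ?G i" using assms by simp
  have "kalikow_at (Vnest \<omega> \<delta>) (confs_sep \<delta>) (hawkes_phi \<psi> h \<delta>) ?lam
      (\<lambda>i v x. Delta_v \<psi> h \<omega> \<delta> i v x / ?lam i v) i"
  proof (rule kalikow_at_divide)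
    show "\<forall>v\<in>Vnest \<omega> \<delta> i. 0 \<le> ?lam i v"
      using G_pos by (auto simp: Vnest_def nbh_idx_nbh Gamma_nonneg)
    have "((\<lambda>k. \<Gamma> i k / ?G i) has_sum 1) {1..}"
      using has_sum_divide_const[OF has_sum_infsum[OF Gamma_summable[of i]], where c = "?G i"] G_pos
      by simp
    then show "(?lam i has_sum 1) (Vnest \<omega> \<delta> i)"
      unfolding has_sum_Vnest_iff by (rule has_sum_cong[THEN iffD1, rotated]) (simp add: nbh_idx_nbh)
    fix v and x :: "'i conf"
    assume v: "v \<in> Vnest \<omega> \<delta> i" and "?lam i v = 0" and x: "x \<in> confs \<inter> confs_sep \<delta>"
    then obtain k where "1 \<le> k" "v = nbh \<omega> \<delta> i k" "\<Gamma> i k = 0"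
      using G_pos by (auto simp: Vnest_def nbh_idx_nbh)
    then show "Delta_v \<psi> h \<omega> \<delta> i v x = 0"
      using Delta_le_Gamma[OF x, of k i] Delta_nonneg[OF x, of k i] by (simp add: Delta_v_nbh)
  qed (auto intro: Delta_v_nonneg Delta_v_cylindrical Delta_v_has_sum)
  moreover have "(\<lambda>i v x. Delta_v \<psi> h \<omega> \<delta> i v x / ?lam i v)
      = (\<lambda>i v x. ?G i / \<Gamma> i (nbh_idx \<omega> \<delta> i v) * Delta_v \<psi> h \<omega> \<delta> i v x)"
    by (simp add: fun_eq_iff mult.commute)
  ultimately show ?thesis by simp
qed

end

end

theorem mainTheorem4:
  fixes \<psi> :: "'i::countable \<Rightarrow> real \<Rightarrow> real"
    and h :: "'i \<Rightarrow> 'i \<Rightarrow> real \<Rightarrow> real"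
    and \<omega> :: "'i \<Rightarrow> nat \<Rightarrow> 'i set"
    and \<delta> L :: real
  assumes delta_pos: "\<delta> > 0"
    and h_nonneg: "\<And>i j t. t \<ge> 0 \<Longrightarrow> h i j t \<ge> 0"
    and h_noninc: "\<And>i j s t. 0 \<le> s \<Longrightarrow> s \<le> t \<Longrightarrow> h i j t \<le> h i j s"
    and h_L1: "\<And>i j. set_integrable lborel {0..} (h i j)"
    and h_norm_sum: "\<And>i. (\<lambda>j. L1norm (h i j)) summable_on UNIV"
    and h_zero_sum: "\<And>i. (\<lambda>j. h i j 0) summable_on UNIV"
    and om1: "\<And>i. \<omega> i 1 = {i}"
    and om_mono: "\<And>i k. k \<ge> 1 \<Longrightarrow> \<omega> i k \<subseteq> \<omega> i (Suc k)"
    and om_union: "\<And>i. (\<Union>k\<in>{1..}. \<omega> i k) = UNIV"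
    and psi_mono: "\<And>i. mono (\<psi> i)"
    and psi_nonneg: "\<And>i u. \<psi> i u \<ge> 0"
    and psi_cont: "\<And>i. continuous_on UNIV (\<psi> i)"
  shows
    "(\<forall>i k. k \<ge> 1 \<longrightarrow>
        (\<forall>x\<in>confs \<inter> confs_sep \<delta>. 0 \<le> Delta \<psi> h \<omega> \<delta> i k x) \<and>
        cylindrical (nbh \<omega> \<delta> i k) (Delta \<psi> h \<omega> \<delta> i k)) \<and>
     (\<forall>i. \<forall>x\<in>confs \<inter> confs_sep \<delta>.
        ((\<lambda>k. Delta \<psi> h \<omega> \<delta> i k x) has_sum hawkes_phi \<psi> h \<delta> i x) {1..}) \<and>
     (\<forall>lam. (\<forall>i. (\<forall>v\<in>Vnest \<omega> \<delta> i. 0 \<le> lam i v) \<and> (lam i has_sum 1) (Vnest \<omega> \<delta> i) \<and>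
               (\<forall>v\<in>Vnest \<omega> \<delta> i. lam i v = 0 \<longrightarrow>
                  (SUP x\<in>confs \<inter> confs_sep \<delta>. ereal (Delta_v \<psi> h \<omega> \<delta> i v x)) = 0))
        \<longrightarrow> kalikow (Vnest \<omega> \<delta>) (confs_sep \<delta>) (hawkes_phi \<psi> h \<delta>) lam
              (\<lambda>i v x. Delta_v \<psi> h \<omega> \<delta> i v x / lam i v)) \<and>
     ((\<forall>i. L-lipschitz_on UNIV (\<psi> i)) \<longrightarrow> (
       (\<forall>\<Gamma> :: 'i \<Rightarrow> nat \<Rightarrow> real.
          (\<forall>i k. k \<ge> 1 \<longrightarrow> \<Gamma> i k \<ge> Gbar \<psi> h \<omega> \<delta> L i k) \<and>
          (\<forall>i. \<Gamma> i summable_on {1..})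
          \<longrightarrow>
          (\<forall>i k. k \<ge> 1 \<longrightarrow>
              (SUP x\<in>confs \<inter> confs_sep \<delta>. ereal (Delta \<psi> h \<omega> \<delta> i k x)) \<le> ereal (\<Gamma> i k)) \<and>
          (\<forall>i. (\<Sum>\<^sub>\<infinity>k\<in>{1..}. \<Gamma> i k) \<noteq> 0 \<longrightarrow>
              kalikow_at (Vnest \<omega> \<delta>) (confs_sep \<delta>) (hawkes_phi \<psi> h \<delta>)
                (\<lambda>i v. \<Gamma> i (nbh_idx \<omega> \<delta> i v) / (\<Sum>\<^sub>\<infinity>k\<in>{1..}. \<Gamma> i k))
                (\<lambda>i v x. (\<Sum>\<^sub>\<infinity>k\<in>{1..}. \<Gamma> i k) / \<Gamma> i (nbh_idx \<omega> \<delta> i v)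
                           * Delta_v \<psi> h \<omega> \<delta> i v x) i \<and>
              (\<forall>v\<in>Vnest \<omega> \<delta> i. \<forall>x\<in>confs \<inter> confs_sep \<delta>.
                 (\<Sum>\<^sub>\<infinity>k\<in>{1..}. \<Gamma> i k) / \<Gamma> i (nbh_idx \<omega> \<delta> i v) * Delta_v \<psi> h \<omega> \<delta> i v x
                   \<le> (\<Sum>\<^sub>\<infinity>k\<in>{1..}. \<Gamma> i k)) \<and>
              (\<forall>x\<in>confs \<inter> confs_sep \<delta>. hawkes_phi \<psi> h \<delta> i x \<le> (\<Sum>\<^sub>\<infinity>k\<in>{1..}. \<Gamma> i k)))) \<and>
       (\<forall>i. Gbar \<psi> h \<omega> \<delta> L i summable_on {1..} \<and>
          (\<Sum>\<^sub>\<infinity>k\<in>{1..}. Gbar \<psi> h \<omega> \<delta> L i k)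
            \<le> \<psi> i 0 + 2 * L * ((\<Sum>\<^sub>\<infinity>j. h i j 0) + (\<Sum>\<^sub>\<infinity>j. L1norm (h i j)) / \<delta>))))"
proof -
  interpret nested_hawkes h \<delta> \<omega> \<psi>
    using assms by unfold_locales (auto intro: decreasing_kernel.intro)
  show ?thesis (is "?nonneg_cylindrical \<and> ?decomposition \<and> ?kalikow \<and> ?lipschitz")
  proof (intro conjI)
    show ?nonneg_cylindrical using Delta_nonneg Delta_cylindrical by auto
    show ?decomposition using Delta_has_sum by auto
    show ?kalikow using kalikow_at_Delta by (auto simp: kalikow_def)
    show ?lipschitz (is "_ \<longrightarrow> ?Gamma \<and> ?Gbar")
    proof (intro impI conjI)
      assume lip: "\<forall>i. L-lipschitz_on UNIV (\<psi> i)"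
      show ?Gbar using Gbar_summable_le lipschitz_on_nonneg lip by blast
      show ?Gamma
      proof (intro allI impI conjI ballI; elim conjE)
      qed (rule SUP_Delta_le_Gamma kalikow_at_Gamma scaled_Delta_v_le_Gamma hawkes_phi_le_Gamma;
          use lip in blast)+
    qed
  qed
qed

end
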